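(* For every integer $k\in\{4-n,\dots,n-1\}$ and every $t\ge 3$ (for cycles) or $t\ge 1$ (for paths): (a) $\left\lceil\frac{t(n+k-3)}{2}\right\rceil\le\gamma_k^o(K_n\times C_t)\le t\left\lceil\frac{n+k+1}{2}\right\rceil$; (b) $\left\lceil\frac{t(n+k-3)+2}{2}\right\rceil\le\gamma_k^o(K_n\times P_t)\le t\left\lceil\frac{n+k+1}{2}\right\rceil$.
   Context: Graphs are finite and simple; $K_n$ is the complete graph on $n$ vertices, $C_t$ the cycle and $P_t$ the path on $t$ vertices. In a graph $G=(V,E)$, for $S\subseteq V$ and $v\in V$, $\delta_S(v)$ is the number of neighbours of $v$ in $S$, $\overline{S}=V\setminus S$, and $\partial(S)$ the set of vertices of $\overline{S}$ with a neighbour in $S$. A nonempty $S$ is an offensive $k$-alliance if $\delta_S(v)\ge\delta_{\overline{S}}(v)+k$ for every $v\in\partial(S)$, and a global offensive $k$-alliance if moreover it is dominating; $\gamma_k^o(G)$ is the minimum cardinality of a global offensive $k$-alliance. The Cartesian product $G_1\times G_2$ has vertex set $V_1\times V_2$, with $(u,v)\sim(u',v')$ iff either $u=u'$ and $v\sim v'$, or $v=v'$ and $u\sim u'$. *)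

theory Defs
  imports Complex_Main
begin

text \<open>A finite simple graph is given by a vertex set V and a symmetric irreflexive
adjacency relation E (restricted to V).\<close>

definition complete_V :: "nat \<Rightarrow> nat set" where "complete_V n = {0..<n}"
definition complete_E :: "nat \<Rightarrow> nat \<Rightarrow> bool" where "complete_E i j = (i \<noteq> j)"

definition cycle_V :: "nat \<Rightarrow> nat set" where "cycle_V t = {0..<t}"
definition cycle_E :: "nat \<Rightarrow> nat \<Rightarrow> nat \<Rightarrow> bool" where
  "cycle_E t i j = (i \<noteq> j \<and> ((i + 1) mod t = j \<or> (j + 1) mod t = i))"

definition path_V :: "nat \<Rightarrow> nat set" where "path_V t = {0..<t}"
definition path_E :: "nat \<Rightarrow> nat \<Rightarrow> bool" where
  "path_E i j = (i + 1 = j \<or> j + 1 = i)"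

definition cprod_V :: "'a set \<Rightarrow> 'b set \<Rightarrow> ('a \<times> 'b) set" where
  "cprod_V V1 V2 = V1 \<times> V2"
definition cprod_E :: "('a \<Rightarrow> 'a \<Rightarrow> bool) \<Rightarrow> ('b \<Rightarrow> 'b \<Rightarrow> bool) \<Rightarrow> 'a \<times> 'b \<Rightarrow> 'a \<times> 'b \<Rightarrow> bool" where
  "cprod_E E1 E2 x y = ((fst x = fst y \<and> E2 (snd x) (snd y)) \<or> (snd x = snd y \<and> E1 (fst x) (fst y)))"

definition deg_in :: "('a \<Rightarrow> 'a \<Rightarrow> bool) \<Rightarrow> 'a set \<Rightarrow> 'a \<Rightarrow> nat" where
  "deg_in E S v = card {u \<in> S. E v u}"

definition boundary :: "'a set \<Rightarrow> ('a \<Rightarrow> 'a \<Rightarrow> bool) \<Rightarrow> 'a set \<Rightarrow> 'a set" where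
  "boundary V E S = {v \<in> V - S. \<exists>u \<in> S. E v u}"

definition offensive_alliance :: "'a set \<Rightarrow> ('a \<Rightarrow> 'a \<Rightarrow> bool) \<Rightarrow> int \<Rightarrow> 'a set \<Rightarrow> bool" where
  "offensive_alliance V E k S \<longleftrightarrow> S \<noteq> {} \<and> S \<subseteq> V \<and>
     (\<forall>v \<in> boundary V E S. int (deg_in E S v) \<ge> int (deg_in E (V - S) v) + k)"

definition dominating :: "'a set \<Rightarrow> ('a \<Rightarrow> 'a \<Rightarrow> bool) \<Rightarrow> 'a set \<Rightarrow> bool" where
  "dominating V E S \<longleftrightarrow> S \<subseteq> V \<and> (\<forall>v \<in> V - S. \<exists>u \<in> S. E v u)"

definition global_offensive_alliance :: "'a set \<Rightarrow> ('a \<Rightarrow> 'a \<Rightarrow> bool) \<Rightarrow> int \<Rightarrow> 'a set \<Rightarrow> bool" where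
  "global_offensive_alliance V E k S \<longleftrightarrow> offensive_alliance V E k S \<and> dominating V E S"

text \<open>gamma_k^o(G): minimum cardinality of a global offensive k-alliance
(V itself is always one when V is nonempty, so the minimum exists).\<close>
definition gamma_off :: "'a set \<Rightarrow> ('a \<Rightarrow> 'a \<Rightarrow> bool) \<Rightarrow> int \<Rightarrow> nat" where
  "gamma_off V E k = Min (card ` {S. global_offensive_alliance V E k S})"

end

theory Submission
  imports Defs
begin

text \<open>Write d(j) for the degree of j in the cycle or path. Cut an alliance S into its columns
S_j = S \<inter> (K_n \<times> {j}). If a column is not inside S, one of its vertices v lies outside S;
being dominated, v is on the boundary, its degree is (n - 1) + d(j), and at most d(j) of its
neighbours in S lie outside its column. The alliance inequality at v therefore gives
2 |S_j| \<ge> n - 1 + k - d(j). Summing over the columns, with \<Sum> d(j) = 2t for C_t and 2(t - 1)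
for P_t, gives the lower bounds. Conversely the first m = \<lceil>(n + k + 1)/2\<rceil> rows form a global
offensive k-alliance: every other vertex has m neighbours in them and at most n + 1 - m outside.\<close>

lemma finite_global_offensive_alliances:
  assumes "finite V"
  shows "finite {S. global_offensive_alliance V E k S}"
proof -
  have "{S. global_offensive_alliance V E k S} \<subseteq> Pow V"
    by (auto simp: global_offensive_alliance_def offensive_alliance_def)
  then show ?thesis
    using assms by (meson finite_Pow_iff finite_subset)
qed

lemma gamma_off_le_card:
  assumes "finite V" and "global_offensive_alliance V E k S"
  shows "gamma_off V E k \<le> card S"
  unfolding gamma_off_def
  using assms finite_global_offensive_alliances[OF assms(1)] by (auto intro: Min_le)

lemma gamma_off_attained:
  assumes "finite V" and "global_offensive_alliance V E k S"
  obtains S' where "global_offensive_alliance V E k S'" and "card S' = gamma_off V E k"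
proof -
  have "gamma_off V E k \<in> card ` {S. global_offensive_alliance V E k S}"
    unfolding gamma_off_def
    using assms finite_global_offensive_alliances[OF assms(1)] by (intro Min_in) auto
  then show ?thesis
    using that by force
qed

lemma deg_in_add_deg_in_diff:
  assumes "finite V" and "S \<subseteq> V"
  shows "deg_in E S v + deg_in E (V - S) v = deg_in E V v"
proof -
  have "{u \<in> V. E v u} = {u \<in> S. E v u} \<union> {u \<in> V - S. E v u}"
    using assms(2) by auto
  moreover have "finite {u \<in> S. E v u}" "finite {u \<in> V - S. E v u}"
    using assms by (auto intro: finite_subset)
  ultimately show ?thesis
    unfolding deg_in_def by (subst card_Un_disjoint[symmetric]) auto
qed

lemma deg_in_cprod_E:
  assumes "finite V1" "finite V2" "i \<in> V1" "j \<in> V2" "\<not> E1 i i" "\<not> E2 j j"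
  shows "deg_in (cprod_E E1 E2) (V1 \<times> V2) (i, j) = deg_in E1 V1 i + deg_in E2 V2 j"
proof -
  have "{u \<in> V1 \<times> V2. cprod_E E1 E2 (i, j) u}
      = {a \<in> V1. E1 i a} \<times> {j} \<union> {i} \<times> {b \<in> V2. E2 j b}"
    using assms by (auto simp: cprod_E_def)
  moreover have "{a \<in> V1. E1 i a} \<times> {j} \<inter> {i} \<times> {b \<in> V2. E2 j b} = {}"
    using assms(5) by auto
  ultimately show ?thesis
    unfolding deg_in_def using assms(1,2) by (simp add: card_Un_disjoint card_cartesian_product)
qed

lemma deg_in_complete:
  assumes "i < n"
  shows "deg_in complete_E {0..<n} i = n - 1"
proof -
  have "{u \<in> {0..<n}. complete_E i u} = {0..<n} - {i}"
    by (auto simp: complete_E_def)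
  then show ?thesis
    using assms by (simp add: deg_in_def)
qed

lemma card_eq_sum_columns:
  fixes n t :: nat
  assumes "S \<subseteq> {0..<n} \<times> {0..<t}"
  shows "card S = (\<Sum>j<t. card {u \<in> S. snd u = j})"
proof -
  have "finite S"
    using assms by (rule finite_subset) simp
  moreover have "snd ` S \<subseteq> {..<t}"
    using assms by auto
  ultimately show ?thesis
    using sum.group[of S "{..<t}" snd "\<lambda>_. 1::nat"] by simp
qed

lemma deg_in_le_column_plus_deg:
  fixes n t :: nat
  assumes "S \<subseteq> {0..<n} \<times> {0..<t}"
  shows "deg_in (cprod_E complete_E F) S (i, j)
           \<le> card {u \<in> S. snd u = j} + deg_in F {0..<t} j"
proof -
  have "{u \<in> S. cprod_E complete_E F (i, j) u}
      \<subseteq> {u \<in> S. snd u = j} \<union> {i} \<times> {b \<in> {0..<t}. F j b}"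
    using assms by (auto simp: cprod_E_def)
  moreover have "finite S"
    using assms by (rule finite_subset) simp
  ultimately have "deg_in (cprod_E complete_E F) S (i, j)
      \<le> card ({u \<in> S. snd u = j} \<union> {i} \<times> {b \<in> {0..<t}. F j b})"
    unfolding deg_in_def by (intro card_mono) auto
  also have "\<dots> \<le> card {u \<in> S. snd u = j} + card ({i} \<times> {b \<in> {0..<t}. F j b})"
    by (rule card_Un_le)
  also have "\<dots> = card {u \<in> S. snd u = j} + deg_in F {0..<t} j"
    by (simp add: deg_in_def card_cartesian_product)
  finally show ?thesis .
qed

lemma column_card_lower_bound:
  fixes n t :: nat
  assumes irrefl: "\<And>j. \<not> F j j" and "j < t" and "k \<le> int n - 1"
    and alliance: "global_offensive_alliance ({0..<n} \<times> {0..<t}) (cprod_E complete_E F) k S"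
  shows "int n - 1 + k - int (deg_in F {0..<t} j) \<le> 2 * int (card {u \<in> S. snd u = j})"
proof -
  let ?V = "{0..<n} \<times> {0..<t}"
  let ?E = "cprod_E complete_E F"
  have SV: "S \<subseteq> ?V" and dom: "\<forall>v \<in> ?V - S. \<exists>u \<in> S. ?E v u"
    and off: "\<forall>v \<in> boundary ?V ?E S. int (deg_in ?E S v) \<ge> int (deg_in ?E (?V - S) v) + k"
    using alliance
    by (auto simp: global_offensive_alliance_def offensive_alliance_def dominating_def)
  show ?thesis
  proof (cases "\<forall>i<n. (i, j) \<in> S")
    case True
    then have "{0..<n} \<times> {j} \<subseteq> {u \<in> S. snd u = j}"
      by auto
    then have "card ({0..<n} \<times> {j}) \<le> card {u \<in> S. snd u = j}"
      using SV by (intro card_mono) (auto intro: finite_subset)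
    then show ?thesis
      using \<open>k \<le> int n - 1\<close> by (simp add: card_cartesian_product)
  next
    case False
    then obtain i where "i < n" and "(i, j) \<notin> S"
      by auto
    then have v: "(i, j) \<in> ?V - S"
      using \<open>j < t\<close> by auto
    then have "(i, j) \<in> boundary ?V ?E S"
      using dom by (auto simp: boundary_def)
    then have "int (deg_in ?E S (i, j)) \<ge> int (deg_in ?E (?V - S) (i, j)) + k"
      using off by blast
    moreover have "deg_in ?E S (i, j) + deg_in ?E (?V - S) (i, j) = n - 1 + deg_in F {0..<t} j"
      using v SV irrefl
      by (simp add: deg_in_add_deg_in_diff deg_in_cprod_E deg_in_complete complete_E_def)
    moreover have "deg_in ?E S (i, j) \<le> card {u \<in> S. snd u = j} + deg_in F {0..<t} j"
      using SV by (rule deg_in_le_column_plus_deg)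
    ultimately show ?thesis
      using \<open>i < n\<close> by linarith
  qed
qed

lemma two_card_alliance_lower_bound:
  fixes n t :: nat
  assumes irrefl: "\<And>j. \<not> F j j" and "k \<le> int n - 1"
    and alliance: "global_offensive_alliance ({0..<n} \<times> {0..<t}) (cprod_E complete_E F) k S"
  shows "int t * (int n - 1 + k) - (\<Sum>j<t. int (deg_in F {0..<t} j)) \<le> 2 * int (card S)"
proof -
  have SV: "S \<subseteq> {0..<n} \<times> {0..<t}"
    using alliance by (auto simp: global_offensive_alliance_def offensive_alliance_def)
  have "int t * (int n - 1 + k) - (\<Sum>j<t. int (deg_in F {0..<t} j))
      = (\<Sum>j<t. int n - 1 + k - int (deg_in F {0..<t} j))"
    by (simp add: sum_subtractf)
  also have "\<dots> \<le> (\<Sum>j<t. 2 * int (card {u \<in> S. snd u = j}))"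
    using column_card_lower_bound[OF irrefl _ \<open>k \<le> int n - 1\<close> alliance] by (intro sum_mono) auto
  also have "\<dots> = 2 * int (card S)"
    using card_eq_sum_columns[OF SV] by (simp add: sum_distrib_left)
  finally show ?thesis .
qed

lemma first_rows_global_offensive_alliance:
  fixes n t m :: nat
  assumes irrefl: "\<And>j. \<not> F j j" and max_deg: "\<And>j. j < t \<Longrightarrow> deg_in F {0..<t} j \<le> D"
    and "0 < m" "m \<le> n" "0 < t" and "int n - 1 + int D + k \<le> 2 * int m"
  shows "global_offensive_alliance ({0..<n} \<times> {0..<t}) (cprod_E complete_E F) k
           ({0..<m} \<times> {0..<t})"
proof -
  let ?V = "{0..<n} \<times> {0..<t}"
  let ?E = "cprod_E complete_E F"
  let ?S = "{0..<m} \<times> {0..<t}"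
  have SV: "?S \<subseteq> ?V"
    using \<open>m \<le> n\<close> by auto
  have dominated: "?E (i, j) (0, j)" and "(0, j) \<in> ?S" if "(i, j) \<in> ?V - ?S" for i j
    using that \<open>0 < m\<close> by (auto simp: cprod_E_def complete_E_def)
  have "int (deg_in ?E ?S (i, j)) \<ge> int (deg_in ?E (?V - ?S) (i, j)) + k"
    if "(i, j) \<in> ?V - ?S" for i j
  proof -
    from that have "m \<le> i" "i < n" "j < t"
      by auto
    have "{u \<in> ?S. ?E (i, j) u} = {0..<m} \<times> {j}"
      using \<open>m \<le> i\<close> \<open>j < t\<close> by (auto simp: cprod_E_def complete_E_def)
    then have "deg_in ?E ?S (i, j) = m"
      by (simp add: deg_in_def card_cartesian_product)
    moreover have "deg_in ?E ?S (i, j) + deg_in ?E (?V - ?S) (i, j) = n - 1 + deg_in F {0..<t} j"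
      using SV \<open>i < n\<close> \<open>j < t\<close> irrefl
      by (simp add: deg_in_add_deg_in_diff deg_in_cprod_E deg_in_complete complete_E_def)
    moreover have "deg_in F {0..<t} j \<le> D"
      using max_deg \<open>j < t\<close> .
    ultimately show ?thesis
      using \<open>i < n\<close> \<open>int n - 1 + int D + k \<le> 2 * int m\<close> by linarith
  qed
  with dominated show ?thesis
    using SV \<open>0 < m\<close> \<open>0 < t\<close>
    unfolding global_offensive_alliance_def offensive_alliance_def dominating_def boundary_def
    by fastforce
qed

lemma deg_in_cycle_le_2: "deg_in (cycle_E t) {0..<t} j \<le> 2"
proof -
  have "{b \<in> {0..<t}. cycle_E t j b} \<subseteq> {(j + 1) mod t, (j + (t - 1)) mod t}"
  proof
    fix b assume "b \<in> {b \<in> {0..<t}. cycle_E t j b}"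
    then have "b < t" and "(j + 1) mod t = b \<or> (b + 1) mod t = j"
      by (auto simp: cycle_E_def)
    moreover have "b = (j + (t - 1)) mod t" if "(b + 1) mod t = j"
    proof -
      have "(j + (t - 1)) mod t = (b + 1 + (t - 1)) mod t"
        using that mod_add_left_eq[of "b + 1" t "t - 1"] by simp
      also have "\<dots> = b"
        using \<open>b < t\<close> by simp
      finally show ?thesis ..
    qed
    ultimately show "b \<in> {(j + 1) mod t, (j + (t - 1)) mod t}"
      by auto
  qed
  then have "deg_in (cycle_E t) {0..<t} j \<le> card {(j + 1) mod t, (j + (t - 1)) mod t}"
    unfolding deg_in_def by (intro card_mono) auto
  also have "\<dots> \<le> 2"
    by (simp add: card_insert_if)
  finally show ?thesis .
qed

lemma deg_in_path: "deg_in path_E {0..<t} j = of_bool (0 < j) + of_bool (j + 1 < t)"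
  if "j < t"
proof -
  have "{b \<in> {0..<t}. path_E j b}
      = (if 0 < j then {j - 1} else {}) \<union> (if j + 1 < t then {j + 1} else {})"
    using that by (auto simp: path_E_def)
  then show ?thesis
    by (simp add: deg_in_def)
qed

lemma sum_deg_in_path: "(\<Sum>j<t. deg_in path_E {0..<t} j) = 2 * (t - 1)"
proof -
  have "(\<Sum>j<t. deg_in path_E {0..<t} j) = (\<Sum>j<t. of_bool (0 < j) + of_bool (j + 1 < t))"
    by (intro sum.cong) (simp_all add: deg_in_path)
  also have "\<dots> = card ({..<t} \<inter> {j. 0 < j}) + card ({..<t} \<inter> {j. j + 1 < t})"
    by (simp add: sum.distrib)
  also have "\<dots> = card {1..<t} + card {..<t - 1}"
    by (intro arg_cong2[where f = "(+)"] arg_cong[where f = card]) auto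
  finally show ?thesis
    by simp
qed

lemma gamma_off_complete_cprod_bounds:
  fixes n t :: nat and k :: int and F :: "nat \<Rightarrow> nat \<Rightarrow> bool"
  defines "\<gamma> \<equiv> gamma_off ({0..<n} \<times> {0..<t}) (cprod_E complete_E F) k"
  assumes irrefl: "\<And>j. \<not> F j j" and max_deg: "\<And>j. j < t \<Longrightarrow> deg_in F {0..<t} j \<le> 2"
    and "0 < t" and "- int n \<le> k" and "k \<le> int n - 1"
  shows "int t * (int n - 1 + k) - (\<Sum>j<t. int (deg_in F {0..<t} j)) \<le> 2 * int \<gamma>"
    and "int \<gamma> \<le> int t * \<lceil>real_of_int (int n + k + 1) / 2\<rceil>"
proof -
  define M where "M = \<lceil>real_of_int (int n + k + 1) / 2\<rceil>"
  have "int n + k + 1 \<le> 2 * M"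
    using ceiling_divide_upper[of "2 :: real" "real_of_int (int n + k + 1)"]
    unfolding M_def by linarith
  moreover have "0 < M" and "M \<le> int n"
    using assms(5,6) by (simp_all add: M_def ceiling_le_iff)
  ultimately have alliance:
    "global_offensive_alliance ({0..<n} \<times> {0..<t}) (cprod_E complete_E F) k
       ({0..<nat M} \<times> {0..<t})"
    using \<open>0 < t\<close> by (intro first_rows_global_offensive_alliance[where F = F, OF irrefl max_deg]) auto
  have finite: "finite ({0..<n} \<times> {0..<t})"
    by simp
  obtain S where minimum: "global_offensive_alliance ({0..<n} \<times> {0..<t}) (cprod_E complete_E F) k S"
    and "card S = \<gamma>"
    unfolding \<gamma>_def using gamma_off_attained[OF finite alliance] .
  have "int t * (int n - 1 + k) - (\<Sum>j<t. int (deg_in F {0..<t} j)) \<le> 2 * int (card S)"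
    using minimum by (rule two_card_alliance_lower_bound[where F = F, OF irrefl \<open>k \<le> int n - 1\<close>])
  then show "int t * (int n - 1 + k) - (\<Sum>j<t. int (deg_in F {0..<t} j)) \<le> 2 * int \<gamma>"
    using \<open>card S = \<gamma>\<close> by simp
  have "\<gamma> \<le> card ({0..<nat M} \<times> {0..<t})"
    unfolding \<gamma>_def using finite alliance by (rule gamma_off_le_card)
  then have "int \<gamma> \<le> int (nat M * t)"
    by (simp only: card_cartesian_product card_atLeastLessThan diff_zero of_nat_le_iff)
  also have "\<dots> = int t * M"
    using \<open>0 < M\<close> by simp
  finally have "int \<gamma> \<le> int t * M" .
  then show "int \<gamma> \<le> int t * \<lceil>real_of_int (int n + k + 1) / 2\<rceil>"
    unfolding M_def .
qed

lemma gamma_off_complete_cycle_bounds: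
  fixes n t :: nat and k :: int
  defines "\<gamma> \<equiv> gamma_off ({0..<n} \<times> {0..<t}) (cprod_E complete_E (cycle_E t)) k"
  assumes "0 < t" and "- int n \<le> k" and "k \<le> int n - 1"
  shows "int t * (int n + k - 3) \<le> 2 * int \<gamma>"
    and "int \<gamma> \<le> int t * \<lceil>real_of_int (int n + k + 1) / 2\<rceil>"
proof -
  have irrefl: "\<And>j. \<not> cycle_E t j j"
    by (simp add: cycle_E_def)
  note bounds = gamma_off_complete_cprod_bounds[where F = "cycle_E t", OF irrefl deg_in_cycle_le_2 assms(2-4),
      folded \<gamma>_def]
  have "(\<Sum>j<t. int (deg_in (cycle_E t) {0..<t} j)) \<le> (\<Sum>j<t. 2)"
    by (intro sum_mono) (simp add: deg_in_cycle_le_2)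
  then show "int t * (int n + k - 3) \<le> 2 * int \<gamma>"
    using bounds(1) by (simp add: algebra_simps)
  show "int \<gamma> \<le> int t * \<lceil>real_of_int (int n + k + 1) / 2\<rceil>"
    using bounds(2) .
qed

lemma gamma_off_complete_path_bounds:
  fixes n t :: nat and k :: int
  defines "\<gamma> \<equiv> gamma_off ({0..<n} \<times> {0..<t}) (cprod_E complete_E path_E) k"
  assumes "0 < t" and "- int n \<le> k" and "k \<le> int n - 1"
  shows "int t * (int n + k - 3) + 2 \<le> 2 * int \<gamma>"
    and "int \<gamma> \<le> int t * \<lceil>real_of_int (int n + k + 1) / 2\<rceil>"
proof -
  have irrefl: "\<And>j. \<not> path_E j j"
    by (simp add: path_E_def)
  have max_deg: "deg_in path_E {0..<t} j \<le> 2" if "j < t" for j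
    using that by (simp add: deg_in_path)
  note bounds = gamma_off_complete_cprod_bounds[where F = path_E, OF irrefl max_deg assms(2-4),
      folded \<gamma>_def]
  have "(\<Sum>j<t. int (deg_in path_E {0..<t} j)) = 2 * int t - 2"
    using sum_deg_in_path[of t] \<open>0 < t\<close> by (simp flip: of_nat_sum)
  then show "int t * (int n + k - 3) + 2 \<le> 2 * int \<gamma>"
    using bounds(1) by (simp add: algebra_simps)
  show "int \<gamma> \<le> int t * \<lceil>real_of_int (int n + k + 1) / 2\<rceil>"
    using bounds(2) .
qed

lemma ceiling_half_le_iff: "\<lceil>real_of_int x / 2\<rceil> \<le> y \<longleftrightarrow> x \<le> 2 * y"
  by (simp add: ceiling_le_iff divide_le_eq)
    (metis of_int_le_iff of_int_mult of_int_numeral mult.commute)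

theorem mainTheorem16:
  fixes n :: nat and k :: int
  assumes "4 - int n \<le> k" and "k \<le> int n - 1"
  shows "(\<forall>t::nat. t \<ge> 3 \<longrightarrow>
            \<lceil>real t * real_of_int (int n + k - 3) / 2\<rceil>
              \<le> int (gamma_off (cprod_V (complete_V n) (cycle_V t)) (cprod_E complete_E (cycle_E t)) k)
          \<and> int (gamma_off (cprod_V (complete_V n) (cycle_V t)) (cprod_E complete_E (cycle_E t)) k)
              \<le> int t * \<lceil>real_of_int (int n + k + 1) / 2\<rceil>)
       \<and> (\<forall>t::nat. t \<ge> 1 \<longrightarrow>
            \<lceil>(real t * real_of_int (int n + k - 3) + 2) / 2\<rceil>
              \<le> int (gamma_off (cprod_V (complete_V n) (path_V t)) (cprod_E complete_E path_E) k)
          \<and> int (gamma_off (cprod_V (complete_V n) (path_V t)) (cprod_E complete_E path_E) k)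
              \<le> int t * \<lceil>real_of_int (int n + k + 1) / 2\<rceil>)"
proof -
  have k: "- int n \<le> k" "k \<le> int n - 1"
    using assms by linarith+
  have vertices: "cprod_V (complete_V n) (cycle_V t) = {0..<n} \<times> {0..<t}"
    "cprod_V (complete_V n) (path_V t) = {0..<n} \<times> {0..<t}" for t
    by (simp_all add: cprod_V_def complete_V_def cycle_V_def path_V_def)
  have of_int_casts: "real t * real_of_int z = real_of_int (int t * z)"
    "real_of_int x + 2 = real_of_int (x + 2)" for t z x
    by simp_all
  show ?thesis
    unfolding vertices of_int_casts ceiling_half_le_iff
    using gamma_off_complete_cycle_bounds[OF _ k] gamma_off_complete_path_bounds[OF _ k]
    by simp
qed

end
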